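(* Let $\rho>0$, $\xi\in\mathbb{R}$, and $H_0=\frac{1}{2(1+\rho r^2)}\big(P_r^2+\frac{P_\phi^2}{r^2}+\xi r^2\big)$ on $(r,\phi)\in(0,\infty)\times\mathbb{S}^1$. Consider trajectories of the Hamiltonian flow on a level set $H_0=E$, $P_\phi=L>0$, with $\phi$ normalized (by a rotation) so that $\phi=0$ at a point where $r$ is minimal. Put $$e=\sqrt{1+\frac{L^2}{E^2}(2\rho E-\xi)},\qquad E_\pm=L^2\big(-\rho\pm\sqrt{\rho^2+\xi/L^2}\big).$$ (a) If $E\ge\xi/(2\rho)$: for $E=0$ the trajectories are $\frac{L}{r^2}=\sqrt{|\xi|}\cos(2\phi)$, and for $E\ne0$ they are $\frac{L^2}{|E|r^2}=\mathrm{sign}(E)+e\cos(2\phi)$. (b) If $E_+<E<\xi/(2\rho)$: the trajectories are $\frac{L^2}{Er^2}=1+e\cos(2\phi)$; in this case they are closed. *)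

theory Defs
  imports "HOL-Analysis.Analysis"
begin

text \<open>The Hamiltonian H0 on T*((0,inf) x S^1), in canonical coordinates
  (r, phi, P_r, P_phi).  It does not depend on phi; the argument is kept so
  that Hamilton's equations can be written uniformly.\<close>
definition H0 :: "real \<Rightarrow> real \<Rightarrow> real \<Rightarrow> real \<Rightarrow> real \<Rightarrow> real \<Rightarrow> real" where
  "H0 \<rho> \<xi> r phi pr pphi = (pr\<^sup>2 + pphi\<^sup>2 / r\<^sup>2 + \<xi> * r\<^sup>2) / (2 * (1 + \<rho> * r\<^sup>2))"

text \<open>A (complete) trajectory of the Hamiltonian flow of H0: a curve
  t \<mapsto> (r t, phi t, pr t, pphi t) with r t > 0, where phi is a real-valued
  (continuous) lift of the angle on S^1, solving Hamilton's equations.\<close>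
definition hamiltonian_trajectory ::
  "real \<Rightarrow> real \<Rightarrow> (real \<Rightarrow> real) \<Rightarrow> (real \<Rightarrow> real) \<Rightarrow> (real \<Rightarrow> real) \<Rightarrow> (real \<Rightarrow> real) \<Rightarrow> bool" where
  "hamiltonian_trajectory \<rho> \<xi> r phi pr pphi \<longleftrightarrow>
     (\<forall>t. r t > 0) \<and>
     (\<forall>t. (r has_real_derivative deriv (\<lambda>p. H0 \<rho> \<xi> (r t) (phi t) p (pphi t)) (pr t)) (at t)) \<and>
     (\<forall>t. (phi has_real_derivative deriv (\<lambda>q. H0 \<rho> \<xi> (r t) (phi t) (pr t) q) (pphi t)) (at t)) \<and>
     (\<forall>t. (pr has_real_derivative - deriv (\<lambda>x. H0 \<rho> \<xi> x (phi t) (pr t) (pphi t)) (r t)) (at t)) \<and>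
     (\<forall>t. (pphi has_real_derivative - deriv (\<lambda>y. H0 \<rho> \<xi> (r t) y (pr t) (pphi t)) (phi t)) (at t))"

end

theory Submission
  imports Defs
begin

text \<open>With \<open>u = L\<^sup>2/r\<^sup>2 - E\<close> and \<open>v = L p\<^sub>r / r\<close>, Hamilton's equations become
  \<open>u' = -2\<phi>' v\<close> and \<open>v' = 2\<phi>' u\<close>: the vector \<open>(u, v)\<close> turns with angle \<open>2\<phi>\<close>. At the
  pericentre \<open>p\<^sub>r = 0\<close> and \<open>\<phi> = 0\<close>, so \<open>u = A cos 2\<phi>\<close> and \<open>v = A sin 2\<phi>\<close> with
  \<open>A = u(t\<^sub>0) \<ge> 0\<close>, and energy conservation gives \<open>A\<^sup>2 = E\<^sup>2 + L\<^sup>2(2\<rho>E - \<xi>)\<close>; this is the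
  orbit equation \<open>L\<^sup>2/r\<^sup>2 = E + A cos 2\<phi>\<close>. If \<open>E < \<xi>/(2\<rho>)\<close> then \<open>A < E\<close>, so \<open>r\<close> is
  bounded and \<open>\<phi>' = L/(r\<^sup>2(1 + \<rho>r\<^sup>2))\<close> is a \<open>2\<pi>\<close>-periodic function of \<open>\<phi>\<close> bounded away
  from zero. Inverting \<open>\<phi>\<close> shows that it gains \<open>2\<pi>\<close> over a fixed time \<open>T\<close>, after which
  \<open>r\<close> and \<open>p\<^sub>r\<close> repeat.\<close>

lemma deriv_H0_pr:
  assumes "1 + \<rho> * r\<^sup>2 \<noteq> 0"
  shows "deriv (\<lambda>p. H0 \<rho> \<xi> r y p q) p = p / (1 + \<rho> * r\<^sup>2)"
proof (rule DERIV_imp_deriv)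
  show "((\<lambda>p. H0 \<rho> \<xi> r y p q) has_real_derivative p / (1 + \<rho> * r\<^sup>2)) (at p)"
    unfolding H0_def using assms
    by (auto intro!: derivative_eq_intros) (simp add: divide_simps power2_eq_square)
qed

lemma deriv_H0_pphi:
  assumes "1 + \<rho> * r\<^sup>2 \<noteq> 0" "r \<noteq> 0"
  shows "deriv (\<lambda>q. H0 \<rho> \<xi> r y p q) q = q / (r\<^sup>2 * (1 + \<rho> * r\<^sup>2))"
proof (rule DERIV_imp_deriv)
  show "((\<lambda>q. H0 \<rho> \<xi> r y p q) has_real_derivative q / (r\<^sup>2 * (1 + \<rho> * r\<^sup>2))) (at q)"
    unfolding H0_def using assms
    by (auto intro!: derivative_eq_intros) (simp add: divide_simps power2_eq_square, algebra)
qed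

lemma deriv_H0_r:
  assumes "1 + \<rho> * r\<^sup>2 \<noteq> 0" "r \<noteq> 0"
  shows "deriv (\<lambda>x. H0 \<rho> \<xi> x y p q) r
           = (\<xi> * r - q\<^sup>2 / r ^ 3 - 2 * \<rho> * r * H0 \<rho> \<xi> r y p q) / (1 + \<rho> * r\<^sup>2)"
proof (rule DERIV_imp_deriv)
  show "((\<lambda>x. H0 \<rho> \<xi> x y p q) has_real_derivative
          (\<xi> * r - q\<^sup>2 / r ^ 3 - 2 * \<rho> * r * H0 \<rho> \<xi> r y p q) / (1 + \<rho> * r\<^sup>2)) (at r)"
    unfolding H0_def using assms
    by (auto intro!: derivative_eq_intros) (simp add: divide_simps power2_eq_square power3_eq_cube, algebra)
qed

lemma rotation_ode_solution:
  fixes \<theta> u v w :: "real \<Rightarrow> real"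
  assumes \<theta>: "\<And>t. (\<theta> has_real_derivative w t) (at t)"
    and u: "\<And>t. (u has_real_derivative - w t * v t) (at t)"
    and v: "\<And>t. (v has_real_derivative w t * u t) (at t)"
  shows "\<exists>a b. \<forall>t. u t = a * cos (\<theta> t) - b * sin (\<theta> t) \<and> v t = a * sin (\<theta> t) + b * cos (\<theta> t)"
proof -
  define a where "a t = u t * cos (\<theta> t) + v t * sin (\<theta> t)" for t
  define b where "b t = v t * cos (\<theta> t) - u t * sin (\<theta> t)" for t
  have "(a has_real_derivative 0) (at t)" "(b has_real_derivative 0) (at t)" for t
    unfolding a_def[abs_def] b_def[abs_def]
    by (auto intro!: derivative_eq_intros \<theta> u v simp: algebra_simps)
  then have "a t = a 0" "b t = b 0" for t
    by (metis DERIV_isconst_all)+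
  moreover have "u t = a t * cos (\<theta> t) - b t * sin (\<theta> t)" "v t = a t * sin (\<theta> t) + b t * cos (\<theta> t)" for t
    using sin_cos_squared_add[of "\<theta> t"] unfolding a_def b_def power2_eq_square by algebra+
  ultimately show ?thesis by metis
qed

lemma surj_if_deriv_bounded_below:
  fixes x x' :: "real \<Rightarrow> real"
  assumes deriv: "\<And>t. (x has_real_derivative x' t) (at t)"
    and bound: "\<And>t. g \<le> x' t" and "g > 0"
  shows "surj x"
proof -
  have growth: "g * d \<le> x (a + d) - x a" if "d > 0" for a d
  proof -
    obtain z where "x (a + d) - x a = d * x' z"
      using MVT2[of a "a + d" x x'] deriv \<open>d > 0\<close> by auto
    then show ?thesis using bound[of z] \<open>d > 0\<close> by (simp add: mult.commute)
  qed
  have "\<exists>t. x t = y" for y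
  proof -
    define d where "d = (\<bar>y\<bar> + \<bar>x 0\<bar>) / g + 1"
    have "d > 0" "g * d = \<bar>y\<bar> + \<bar>x 0\<bar> + g"
      unfolding d_def using \<open>g > 0\<close> by (auto simp: field_simps intro!: add_nonneg_pos)
    then have "x (- d) \<le> y" "y \<le> x d"
      using growth[of d 0] growth[of d "- d"] \<open>g > 0\<close> by auto
    moreover have "isCont x t" for t
      using deriv DERIV_isCont by blast
    ultimately show ?thesis
      using IVT[of x "- d" y d] \<open>d > 0\<close> by auto
  qed
  then show ?thesis by (metis surjI)
qed

lemma autonomous_ode_periodic_shift:
  fixes x f :: "real \<Rightarrow> real"
  assumes deriv: "\<And>t. (x has_real_derivative f (x t)) (at t)"
    and bound: "\<And>y. g \<le> f y" and "g > 0"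
    and periodic: "\<And>y. f (y + p) = f y" and "p > 0"
  shows "\<exists>T>0. \<forall>t. x (t + T) = x t + p"
proof -
  have mono: "x a < x b" if "a < b" for a b
    using DERIV_pos_imp_increasing[OF that] deriv bound \<open>g > 0\<close> by (meson less_le_trans)
  then have "inj x"
    by (metis injI linorder_neqE_linordered_idom order_less_irrefl)
  moreover have "surj x"
    using surj_if_deriv_bounded_below[OF deriv bound \<open>g > 0\<close>] .
  ultimately obtain \<tau> where x_\<tau>: "\<And>y. x (\<tau> y) = y" and \<tau>_x: "\<And>t. \<tau> (x t) = t"
    by (metis bij_betw_def bij_inv_eq_iff)
  have "isCont x t" for t
    using deriv DERIV_isCont by blast
  then have "isCont \<tau> y" for y
    using isCont_inverse_function[of 1 "\<tau> y" \<tau> x] \<tau>_x x_\<tau> by auto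
  have \<tau>_deriv: "(\<tau> has_real_derivative inverse (f y)) (at y)" for y
  proof (rule DERIV_inverse_function[where a = "y - 1" and b = "y + 1"])
    show "(x has_real_derivative f y) (at (\<tau> y))"
      using deriv[of "\<tau> y"] by (simp add: x_\<tau>)
  qed (use bound[of y] \<open>g > 0\<close> x_\<tau> \<open>\<And>y. isCont \<tau> y\<close> in auto)
  define T where "T = \<tau> p - \<tau> 0"
  have "((\<lambda>y. \<tau> (y + p)) has_real_derivative inverse (f (y + p)) * 1) (at y)" for y
    by (rule DERIV_chain2[OF \<tau>_deriv]) (auto intro!: derivative_eq_intros)
  then have "((\<lambda>y. \<tau> (y + p) - \<tau> y) has_real_derivative 0) (at y)" for y
    using DERIV_diff[OF _ \<tau>_deriv[of y]] by (fastforce simp: periodic)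
  then have shift: "\<tau> (y + p) = \<tau> y + T" for y
    using DERIV_isconst_all[of "\<lambda>y. \<tau> (y + p) - \<tau> y" y 0] unfolding T_def by simp
  have "T > 0"
    using mono[of "\<tau> p" "\<tau> 0"] x_\<tau>[of p] x_\<tau>[of 0] \<open>p > 0\<close> unfolding T_def
    by (cases "\<tau> p" "\<tau> 0" rule: linorder_cases) auto
  moreover have "x (t + T) = x t + p" for t
    using shift[of "x t"] x_\<tau> \<tau>_x by metis
  ultimately show ?thesis by blast
qed

locale H0_trajectory =
  fixes \<rho> \<xi> E L :: real and r phi pr pphi :: "real \<Rightarrow> real"
  assumes rho_pos: "\<rho> > 0" and L_pos: "L > 0"
    and trajectory: "hamiltonian_trajectory \<rho> \<xi> r phi pr pphi"
    and energy: "\<forall>t. H0 \<rho> \<xi> (r t) (phi t) (pr t) (pphi t) = E"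
    and angular_momentum: "\<forall>t. pphi t = L"
begin

definition omega :: "real \<Rightarrow> real" where
  "omega t = L / ((r t)\<^sup>2 * (1 + \<rho> * (r t)\<^sup>2))"

definition u :: "real \<Rightarrow> real" where
  "u t = L\<^sup>2 / (r t)\<^sup>2 - E"

definition v :: "real \<Rightarrow> real" where
  "v t = L * pr t / r t"

definition amplitude :: real where
  "amplitude = sqrt (E\<^sup>2 + L\<^sup>2 * (2 * \<rho> * E - \<xi>))"

lemma r_pos: "r t > 0"
  using trajectory by (simp add: hamiltonian_trajectory_def)

lemma one_plus_rho_r_sq_pos: "1 + \<rho> * (r t)\<^sup>2 > 0"
  using rho_pos by (simp add: add_pos_nonneg)

lemma omega_pos: "omega t > 0"
  unfolding omega_def using L_pos r_pos[of t] one_plus_rho_r_sq_pos[of t] by simp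

lemma energy_eq: "(pr t)\<^sup>2 + L\<^sup>2 / (r t)\<^sup>2 + \<xi> * (r t)\<^sup>2 = 2 * E * (1 + \<rho> * (r t)\<^sup>2)"
  using energy angular_momentum one_plus_rho_r_sq_pos[of t]
  by (auto simp: H0_def divide_simps)

lemma r_deriv: "(r has_real_derivative pr t / (1 + \<rho> * (r t)\<^sup>2)) (at t)"
proof -
  have "(r has_real_derivative deriv (\<lambda>p. H0 \<rho> \<xi> (r t) (phi t) p (pphi t)) (pr t)) (at t)"
    using trajectory by (simp add: hamiltonian_trajectory_def)
  then show ?thesis
    using deriv_H0_pr[of \<rho> "r t"] one_plus_rho_r_sq_pos[of t] by simp
qed

lemma phi_deriv: "(phi has_real_derivative omega t) (at t)"
proof -
  have "(phi has_real_derivative deriv (\<lambda>q. H0 \<rho> \<xi> (r t) (phi t) (pr t) q) (pphi t)) (at t)"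
    using trajectory by (simp add: hamiltonian_trajectory_def)
  then show ?thesis
    using deriv_H0_pphi[of \<rho> "r t"] one_plus_rho_r_sq_pos[of t] r_pos[of t] angular_momentum
    by (simp add: omega_def)
qed

lemma pr_deriv:
  "(pr has_real_derivative (L\<^sup>2 / (r t)^3 - \<xi> * r t + 2 * \<rho> * E * r t) / (1 + \<rho> * (r t)\<^sup>2)) (at t)"
proof -
  have "(pr has_real_derivative - deriv (\<lambda>x. H0 \<rho> \<xi> x (phi t) (pr t) (pphi t)) (r t)) (at t)"
    using trajectory by (simp add: hamiltonian_trajectory_def)
  then show ?thesis
    using deriv_H0_r[of \<rho> "r t"] one_plus_rho_r_sq_pos[of t] r_pos[of t] angular_momentum energy
    by (simp add: minus_divide_left algebra_simps)
qed

lemma u_deriv: "(u has_real_derivative - (2 * omega t) * v t) (at t)"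
  unfolding u_def[abs_def] v_def omega_def using r_pos[of t] one_plus_rho_r_sq_pos[of t]
  by (auto intro!: derivative_eq_intros r_deriv)
     (simp add: divide_simps power2_eq_square power3_eq_cube eval_nat_numeral)

lemma v_deriv: "(v has_real_derivative 2 * omega t * u t) (at t)"
  unfolding v_def[abs_def] u_def omega_def using r_pos[of t] one_plus_rho_r_sq_pos[of t] energy_eq[of t]
  by (auto intro!: derivative_eq_intros r_deriv pr_deriv)
     (simp add: divide_simps power2_eq_square power3_eq_cube, algebra)

lemma u_sq_plus_v_sq: "(u t)\<^sup>2 + (v t)\<^sup>2 = E\<^sup>2 + L\<^sup>2 * (2 * \<rho> * E - \<xi>)"
  unfolding u_def v_def using r_pos[of t] energy_eq[of t]
  by (simp add: divide_simps power2_eq_square, algebra)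

lemma energy_discriminant_nonneg: "0 \<le> E\<^sup>2 + L\<^sup>2 * (2 * \<rho> * E - \<xi>)"
  using u_sq_plus_v_sq[of 0] by (metis sum_power2_ge_zero)

lemma amplitude_sq: "amplitude\<^sup>2 = E\<^sup>2 + L\<^sup>2 * (2 * \<rho> * E - \<xi>)"
  using energy_discriminant_nonneg by (simp add: amplitude_def)

lemma amplitude_nonneg: "amplitude \<ge> 0"
  using energy_discriminant_nonneg by (simp add: amplitude_def)

lemma amplitude_lt_energy:
  assumes "E < \<xi> / (2 * \<rho>)"
  shows "amplitude < E"
proof -
  have "2 * \<rho> * E < \<xi>"
    using assms rho_pos by (simp add: field_simps)
  then have "(\<xi> - 2 * \<rho> * E) * (r 0)\<^sup>2 > 0"
    using r_pos[of 0] by simp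
  moreover have "2 * E = (pr 0)\<^sup>2 + L\<^sup>2 / (r 0)\<^sup>2 + (\<xi> - 2 * \<rho> * E) * (r 0)\<^sup>2"
    using energy_eq[of 0] by (simp add: algebra_simps)
  moreover have "L\<^sup>2 / (r 0)\<^sup>2 > 0"
    using L_pos r_pos[of 0] by simp
  ultimately have "E > 0"
    using zero_le_power2[of "pr 0"] by linarith
  moreover have "amplitude\<^sup>2 < E\<^sup>2"
    unfolding amplitude_sq using \<open>2 * \<rho> * E < \<xi>\<close> L_pos
    by (simp add: mult_pos_neg algebra_simps)
  ultimately show ?thesis
    using power2_less_imp_less[of amplitude E] by simp
qed

end

locale H0_pericentre_trajectory = H0_trajectory +
  fixes t0 :: real
  assumes r_min: "\<forall>t. r t0 \<le> r t" and phi_t0: "phi t0 = 0"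
begin

lemma pr_t0: "pr t0 = 0"
proof -
  have "pr t0 / (1 + \<rho> * (r t0)\<^sup>2) = 0"
    by (rule DERIV_local_min[OF r_deriv, of 1]) (use r_min in auto)
  then show ?thesis
    using one_plus_rho_r_sq_pos[of t0] by simp
qed

lemma u_le_u_t0: "u t \<le> u t0"
proof -
  have "(r t0)\<^sup>2 \<le> (r t)\<^sup>2"
    using r_min r_pos[of t0] by (intro power_mono) auto
  then show ?thesis
    unfolding u_def using r_pos[of t0] r_pos[of t] by (simp add: divide_left_mono)
qed

lemma u_v_polar: "u t = u t0 * cos (2 * phi t) \<and> v t = u t0 * sin (2 * phi t)"
proof -
  have "((\<lambda>t. 2 * phi t) has_real_derivative 2 * omega t) (at t)" for t
    by (rule DERIV_cmult[OF phi_deriv])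
  then obtain a b where ab: "\<And>t. u t = a * cos (2 * phi t) - b * sin (2 * phi t)"
      "\<And>t. v t = a * sin (2 * phi t) + b * cos (2 * phi t)"
    using rotation_ode_solution[of "\<lambda>t. 2 * phi t" "\<lambda>t. 2 * omega t" u v] u_deriv v_deriv by blast
  moreover have "v t0 = 0"
    by (simp add: v_def pr_t0)
  ultimately have "a = u t0" "b = 0"
    using ab[of t0] by (simp_all add: phi_t0)
  then show ?thesis
    using ab by simp
qed

text \<open>If \<open>u(t\<^sub>0) < 0\<close>, maximality of \<open>u\<close> at \<open>t\<^sub>0\<close> forces \<open>cos 2\<phi> = 1\<close> throughout, so \<open>v\<close>
  vanishes identically, contradicting \<open>v' = 2\<phi>'u \<noteq> 0\<close>.\<close>

lemma u_t0_nonneg: "u t0 \<ge> 0"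
proof (rule ccontr)
  assume "\<not> u t0 \<ge> 0"
  then have "cos (2 * phi t) = 1" for t
    using u_le_u_t0[of t] u_v_polar[of t] cos_le_one[of "2 * phi t"] by (simp add: mult_le_cancel_left)
  then have "v = (\<lambda>_. 0)"
    using u_v_polar sin_cos_squared_add[of "2 * phi _"] by fastforce
  then have "2 * omega t0 * u t0 = 0"
    using v_deriv[of t0] DERIV_const DERIV_unique by metis
  then show False
    using omega_pos[of t0] \<open>\<not> u t0 \<ge> 0\<close> by simp
qed

lemma u_t0_eq_amplitude: "u t0 = amplitude"
proof -
  have "(u t0)\<^sup>2 = E\<^sup>2 + L\<^sup>2 * (2 * \<rho> * E - \<xi>)"
    using u_sq_plus_v_sq[of t0] u_v_polar[of t0] by (simp add: phi_t0)
  then show ?thesis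
    using u_t0_nonneg by (simp add: amplitude_def real_sqrt_unique)
qed

lemma orbit: "L\<^sup>2 / (r t)\<^sup>2 = E + amplitude * cos (2 * phi t)"
proof -
  have "u t = amplitude * cos (2 * phi t)"
    using u_v_polar[of t] u_t0_eq_amplitude by simp
  then show ?thesis
    by (simp add: u_def algebra_simps)
qed

lemma radial_momentum: "pr t = amplitude * sin (2 * phi t) * r t / L"
proof -
  have "L * pr t / r t = amplitude * sin (2 * phi t)"
    using u_v_polar[of t] u_t0_eq_amplitude by (simp add: v_def)
  then show ?thesis
    using r_pos[of t] L_pos by (simp add: field_simps)
qed

lemma orbit_zero_energy:
  assumes "E = 0"
  shows "L / (r t)\<^sup>2 = sqrt \<bar>\<xi>\<bar> * cos (2 * phi t)"
proof -
  have "\<xi> \<le> 0"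
    using energy_discriminant_nonneg assms L_pos by (simp add: mult_le_0_iff)
  then have "E\<^sup>2 + L\<^sup>2 * (2 * \<rho> * E - \<xi>) = L\<^sup>2 * \<bar>\<xi>\<bar>"
    using assms by simp
  then have "amplitude = L * sqrt \<bar>\<xi>\<bar>"
    unfolding amplitude_def using L_pos by (simp add: real_sqrt_mult)
  then have "L * (L / (r t)\<^sup>2) = L * (sqrt \<bar>\<xi>\<bar> * cos (2 * phi t))"
    using orbit[of t] assms by (simp add: power2_eq_square)
  then show ?thesis
    using L_pos by (metis less_irrefl mult_left_cancel)
qed

lemma orbit_nonzero_energy:
  assumes "E \<noteq> 0"
  shows "L\<^sup>2 / (\<bar>E\<bar> * (r t)\<^sup>2) = sgn E + sqrt (1 + L\<^sup>2 / E\<^sup>2 * (2 * \<rho> * E - \<xi>)) * cos (2 * phi t)"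
proof -
  have "1 + L\<^sup>2 / E\<^sup>2 * (2 * \<rho> * E - \<xi>) = amplitude\<^sup>2 / E\<^sup>2"
    using assms by (simp add: amplitude_sq field_simps)
  then have eccentricity: "sqrt (1 + L\<^sup>2 / E\<^sup>2 * (2 * \<rho> * E - \<xi>)) = amplitude / \<bar>E\<bar>"
    using amplitude_nonneg by (simp add: real_sqrt_divide)
  have "L\<^sup>2 / (\<bar>E\<bar> * (r t)\<^sup>2) = (L\<^sup>2 / (r t)\<^sup>2) / \<bar>E\<bar>"
    by (simp add: divide_divide_eq_left mult.commute)
  also have "\<dots> = (E + amplitude * cos (2 * phi t)) / \<bar>E\<bar>"
    by (simp add: orbit)
  also have "\<dots> = sgn E + amplitude / \<bar>E\<bar> * cos (2 * phi t)"
    using assms by (simp add: add_divide_distrib sgn_if)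
  finally show ?thesis
    unfolding eccentricity .
qed

definition orbit_radius :: "real \<Rightarrow> real" where
  "orbit_radius y = L / sqrt (E + amplitude * cos (2 * y))"

definition angular_velocity :: "real \<Rightarrow> real" where
  "angular_velocity y = L / ((orbit_radius y)\<^sup>2 * (1 + \<rho> * (orbit_radius y)\<^sup>2))"

lemma r_eq_orbit_radius: "r t = orbit_radius (phi t)"
proof -
  have "sqrt (L\<^sup>2 / (r t)\<^sup>2) = L / r t"
    using L_pos r_pos[of t] by (simp add: real_sqrt_divide)
  then show ?thesis
    using L_pos by (simp add: orbit_radius_def orbit[symmetric])
qed

lemma omega_eq_angular_velocity: "omega t = angular_velocity (phi t)"
  by (simp add: omega_def angular_velocity_def r_eq_orbit_radius)

lemma orbit_radius_periodic: "orbit_radius (y + 2 * pi) = orbit_radius y"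
  unfolding orbit_radius_def by (metis cos_periodic distrib_left mult_2 add.assoc)

lemma angular_velocity_lower_bound:
  assumes "amplitude < E"
  defines "R \<equiv> L / sqrt (E - amplitude)"
  shows "0 < L / (R\<^sup>2 * (1 + \<rho> * R\<^sup>2)) \<and> L / (R\<^sup>2 * (1 + \<rho> * R\<^sup>2)) \<le> angular_velocity y"
proof -
  have "E - amplitude \<le> E + amplitude * cos (2 * y)"
    using amplitude_nonneg mult_left_mono[OF cos_ge_minus_one amplitude_nonneg] by simp
  then have "0 < orbit_radius y" "orbit_radius y \<le> R"
    using assms L_pos by (auto simp: orbit_radius_def R_def intro!: divide_left_mono)
  then have "(orbit_radius y)\<^sup>2 * (1 + \<rho> * (orbit_radius y)\<^sup>2) \<le> R\<^sup>2 * (1 + \<rho> * R\<^sup>2)"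
    using rho_pos by (intro mult_mono add_left_mono mult_left_mono power_mono) auto
  moreover have "0 < R"
    using assms L_pos by (simp add: R_def)
  ultimately show ?thesis
    using \<open>0 < orbit_radius y\<close> L_pos rho_pos
    by (auto simp: angular_velocity_def intro!: divide_left_mono divide_pos_pos mult_pos_pos add_pos_nonneg)
qed

lemma bounded_orbit_periodic:
  assumes "amplitude < E"
  shows "\<exists>T>0. \<forall>t. r (t + T) = r t \<and> pr (t + T) = pr t \<and> phi (t + T) = phi t + 2 * pi"
proof -
  obtain g where "g > 0" "\<And>y. g \<le> angular_velocity y"
    using angular_velocity_lower_bound[OF assms] by blast
  moreover have "(phi has_real_derivative angular_velocity (phi t)) (at t)" for t
    using phi_deriv[of t] by (simp add: omega_eq_angular_velocity)
  moreover have "angular_velocity (y + 2 * pi) = angular_velocity y" for y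
    by (simp add: angular_velocity_def orbit_radius_periodic)
  ultimately obtain T where "T > 0" and shift: "\<And>t. phi (t + T) = phi t + 2 * pi"
    using autonomous_ode_periodic_shift[of phi angular_velocity g "2 * pi"] by auto
  moreover have "r (t + T) = r t" for t
    by (simp add: r_eq_orbit_radius shift orbit_radius_periodic)
  moreover have "sin (2 * (y + 2 * pi)) = sin (2 * y)" for y
    by (metis sin_periodic distrib_left mult_2 add.assoc)
  ultimately show ?thesis
    by (metis radial_momentum)
qed

end

theorem proposition10:
  fixes \<rho> \<xi> E L t0 :: real and r phi pr pphi :: "real \<Rightarrow> real"
  assumes "\<rho> > 0" and "L > 0"
    and "hamiltonian_trajectory \<rho> \<xi> r phi pr pphi"
    and "\<forall>t. H0 \<rho> \<xi> (r t) (phi t) (pr t) (pphi t) = E"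
    and "\<forall>t. pphi t = L"
    and "\<forall>t. r t0 \<le> r t" and "phi t0 = 0"
  shows "(E \<ge> \<xi> / (2 * \<rho>) \<longrightarrow>
            (E = 0 \<longrightarrow> (\<forall>t. L / (r t)\<^sup>2 = sqrt \<bar>\<xi>\<bar> * cos (2 * phi t))) \<and>
            (E \<noteq> 0 \<longrightarrow> (\<forall>t. L\<^sup>2 / (\<bar>E\<bar> * (r t)\<^sup>2)
                 = sgn E + sqrt (1 + L\<^sup>2 / E\<^sup>2 * (2 * \<rho> * E - \<xi>)) * cos (2 * phi t))))
       \<and> (L\<^sup>2 * (- \<rho> + sqrt (\<rho>\<^sup>2 + \<xi> / L\<^sup>2)) < E \<and> E < \<xi> / (2 * \<rho>) \<longrightarrow>
            (\<forall>t. L\<^sup>2 / (E * (r t)\<^sup>2)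
                 = 1 + sqrt (1 + L\<^sup>2 / E\<^sup>2 * (2 * \<rho> * E - \<xi>)) * cos (2 * phi t)) \<and>
            (\<exists>T > 0. \<forall>t. r (t + T) = r t \<and> pr (t + T) = pr t \<and>
                 (\<exists>k::int. phi (t + T) = phi t + 2 * pi * of_int k)))"
proof -
  interpret H0_pericentre_trajectory \<rho> \<xi> E L r phi pr pphi t0
    using assms by unfold_locales
  text \<open>The bound \<open>E\<^sub>+ < E\<close>
    only excludes the circular orbits (\<open>e = 0\<close>), which are closed as well.\<close>
  have "(\<forall>t. L\<^sup>2 / (E * (r t)\<^sup>2) = 1 + sqrt (1 + L\<^sup>2 / E\<^sup>2 * (2 * \<rho> * E - \<xi>)) * cos (2 * phi t)) \<and>
        (\<exists>T > 0. \<forall>t. r (t + T) = r t \<and> pr (t + T) = pr t \<and>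
           (\<exists>k::int. phi (t + T) = phi t + 2 * pi * of_int k))"
    if "E < \<xi> / (2 * \<rho>)"
  proof
    have "amplitude < E"
      using amplitude_lt_energy[OF that] .
    then have "E > 0"
      using amplitude_nonneg by linarith
    then show "\<forall>t. L\<^sup>2 / (E * (r t)\<^sup>2) = 1 + sqrt (1 + L\<^sup>2 / E\<^sup>2 * (2 * \<rho> * E - \<xi>)) * cos (2 * phi t)"
      using orbit_nonzero_energy by simp
    show "\<exists>T > 0. \<forall>t. r (t + T) = r t \<and> pr (t + T) = pr t \<and>
            (\<exists>k::int. phi (t + T) = phi t + 2 * pi * of_int k)"
      using bounded_orbit_periodic[OF \<open>amplitude < E\<close>] by (metis mult.right_neutral of_int_1)
  qed
  then show ?thesis
    using orbit_zero_energy orbit_nonzero_energy by blast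
qed

end
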